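(* Let $\beta=\langle\beta_1,\beta_*,a\mapsto\tau_a\rangle:Y\to FY$ be an $F$-coalgebra in $\mathbf{Meas}$ (so $\beta_1,\beta_*:Y\to\mathbb I$ and $\tau_a:Y\to Y$ are measurable). The following are equivalent: (i) there exists an $F$-coalgebra morphism $[\![-]\!]$ from $(Y,\beta)$ to $(\mathbb DA^\infty,\Pi)$, i.e. a measurable map $[\![-]\!]:Y\to\mathbb DA^\infty$ with $\Pi\circ[\![-]\!]=F[\![-]\!]\circ\beta$; (ii) for all $y\in Y$, $\beta_1(y)=\beta_*(y)+\sum_{a\in A}\beta_1(\tau_a(y))$. Moreover, in this case the morphism in (i) is unique.
   Context: Work in $\mathbf{Meas}$. $\mathbb I=[0,1]$ with Borel $\sigma$-algebra; $A$ finite alphabet; $A^\infty=A^*\cup A^\omega$ (finite and infinite words, empty word $\varepsilon$) with $\sigma$-algebra $\Sigma_{A^\infty}$ generated by $S_\infty=\{\emptyset\}\cup\{\{w\}\mid w\in A^*\}\cup\{wA^\infty\mid w\in A^*\}$, where $wS=\{wv\mid v\in S\}$. $\mathbb DA^\infty$ is the set of sub-probability measures on $A^\infty$ with the $\sigma$-algebra generated by the maps $m\mapsto m(S)$, $S\in\Sigma_{A^\infty}$. The measure derivative of $m$ w.r.t. $a\in A$ is $m_a(S)=m(aS)$. $F$ is the functor $FX=\mathbb I\times\mathbb I\times X^A$ (product $\sigma$-algebra), $Ff=\mathrm{id}_{\mathbb I}\times\mathrm{id}_{\mathbb I}\times f^A$. $\Pi:\mathbb DA^\infty\to F\mathbb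 DA^\infty$ is $\Pi(m)=\langle m(A^\infty),\ m(\{\varepsilon\}),\ a\mapsto m_a\rangle$. *)

theory Defs
  imports "HOL-Probability.Probability" "HOL-Library.Stream"
begin

datatype 'a infword = FinW "'a list" | InfW "'a stream"

definition eps :: "'a infword" where "eps = FinW []"

fun app :: "'a list \<Rightarrow> 'a infword \<Rightarrow> 'a infword" where
  "app w (FinW v) = FinW (w @ v)"
| "app w (InfW s) = InfW (w @- s)"

definition prefix_set :: "'a list \<Rightarrow> 'a infword set \<Rightarrow> 'a infword set" where
  "prefix_set w S = app w ` S"

definition S_inf :: "'a infword set set" where
  "S_inf = {{}} \<union> {{FinW w} | w. True} \<union> {prefix_set w UNIV | w. True}"

definition AInf :: "'a infword measure" where
  "AInf = sigma UNIV S_inf"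

definition unitI :: "real measure" where
  "unitI = restrict_space borel {0..1}"

text \<open>f : Y \<rightarrow> \<D>A^\<infinity> is an F-coalgebra morphism from (Y, <b1, bs, a \<mapsto> tau a>) to (\<D>A^\<infinity>, \<Pi>):
  f is measurable and \<Pi> \<circ> f = Ff \<circ> \<beta>, i.e. componentwise
  f(y)(A^\<infinity>) = b1 y, f(y)({\<epsilon>}) = bs y and (f y)_a = f (tau a y),
  where the measure derivative is m_a(S) = m(aS).\<close>
definition coalg_morphism ::
  "'y measure \<Rightarrow> ('y \<Rightarrow> real) \<Rightarrow> ('y \<Rightarrow> real) \<Rightarrow> ('a \<Rightarrow> 'y \<Rightarrow> 'y)
   \<Rightarrow> ('y \<Rightarrow> 'a infword measure) \<Rightarrow> bool" where
  "coalg_morphism Y b1 bs tau f \<longleftrightarrow>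
     f \<in> measurable Y (subprob_algebra AInf) \<and>
     (\<forall>y\<in>space Y.
        emeasure (f y) (space AInf) = ennreal (b1 y) \<and>
        emeasure (f y) {eps} = ennreal (bs y) \<and>
        (\<forall>a. \<forall>S\<in>sets AInf. emeasure (f (tau a y)) S = emeasure (f y) (prefix_set [a] S)))"

end

theory Submission
  imports Defs
begin

text \<open>
  Uniqueness: a morphism must give the cylinder \<open>w A\<^sup>\<infinity>\<close> the mass \<open>\<beta>\<^sub>1 (\<tau>\<^sub>w y)\<close> and the
  word \<open>w\<close> the mass \<open>\<beta>\<^sub>* (\<tau>\<^sub>w y)\<close>, and these sets form an intersection-stable generator.
  Necessity of (ii): split \<open>A\<^sup>\<infinity>\<close> into \<open>{\<epsilon>}\<close> and the cylinders \<open>a A\<^sup>\<infinity>\<close>.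

  Existence: the masses \<open>p w = \<beta>\<^sub>1 (\<tau>\<^sub>w y)\<close> and \<open>q w = \<beta>\<^sub>* (\<tau>\<^sub>w y)\<close> satisfy
  \<open>p w = q w + (\<Sum>a. p (w a))\<close>, so \<open>[0, p \<epsilon>)\<close> can be cut into nested intervals of length
  \<open>p w\<close>, each consisting of a stop interval of length \<open>q w\<close> followed by the intervals of its
  children. Following the branch of a point through these intervals gives a measurable map
  \<open>[0, p \<epsilon>) \<rightarrow> A\<^sup>\<infinity>\<close>, under which Lebesgue measure has the prescribed masses. Both sides
  of the morphism equation for \<open>m\<^sub>a\<close> are finite measures agreeing on the generators.
\<close>

section \<open>Finite and infinite words\<close>

lemma space_AInf [simp]: "space AInf = UNIV"
  unfolding AInf_def by (simp add: space_measure_of_conv)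

lemma sets_AInf: "sets AInf = sigma_sets UNIV S_inf"
  unfolding AInf_def by (simp add: sets_measure_of_conv)

lemma sets_AInf_generators [measurable]:
  "{FinW w} \<in> sets AInf" "prefix_set w UNIV \<in> sets AInf"
  unfolding sets_AInf S_inf_def by (auto intro: sigma_sets.Basic)

lemma sets_AInf_UNIV [measurable]: "UNIV \<in> sets AInf"
  using sets.top[of AInf] by simp

lemma S_inf_cases [consumes 1, case_names empty singleton cylinder]:
  assumes "X \<in> S_inf"
  obtains "X = {}" | w where "X = {FinW w}" | w where "X = prefix_set w UNIV"
  using assms unfolding S_inf_def by auto

lemma app_Nil [simp]: "app [] x = x"
  by (cases x) auto

lemma app_append [simp]: "app u (app v x) = app (u @ v) x"
  by (cases x) auto

lemma inj_app: "inj (app w)"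
proof (rule injI)
  fix x y assume "app w x = app w y" then show "x = y"
    by (cases x; cases y) auto
qed

lemma prefix_set_Nil [simp]: "prefix_set [] S = S"
  unfolding prefix_set_def by simp

lemma prefix_set_empty [simp]: "prefix_set w {} = {}"
  unfolding prefix_set_def by simp

lemma prefix_set_append: "prefix_set u (prefix_set v S) = prefix_set (u @ v) S"
  unfolding prefix_set_def image_image by simp

lemma prefix_set_singleton [simp]: "prefix_set w {x} = {app w x}"
  unfolding prefix_set_def by simp

lemma app_in_prefix_set_UNIV: "app w x \<in> prefix_set w UNIV"
  unfolding prefix_set_def by simp

lemma prefix_set_subset_UNIV: "prefix_set w A \<subseteq> prefix_set w UNIV"
  unfolding prefix_set_def by auto

lemma prefix_set_Diff: "prefix_set w (A - B) = prefix_set w A - prefix_set w B"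
  unfolding prefix_set_def using inj_app by (rule image_set_diff)

lemma prefix_set_disjoint: "A \<inter> B = {} \<Longrightarrow> prefix_set w A \<inter> prefix_set w B = {}"
  unfolding prefix_set_def by (simp flip: image_Int[OF inj_app])

lemma prefix_set_UN: "prefix_set w (\<Union>i. A i) = (\<Union>i. prefix_set w (A i))"
  unfolding prefix_set_def by auto

lemma mem_prefix_set_UNIV:
  "x \<in> prefix_set w UNIV \<longleftrightarrow>
     (case x of FinW v \<Rightarrow> prefix w v | InfW s \<Rightarrow> stake (length w) s = w)"
proof (cases x)
  case (FinW v)
  have "FinW v \<in> range (app w) \<longleftrightarrow> prefix w v"
  proof
    assume "FinW v \<in> range (app w)"
    then obtain y where "FinW v = app w y" by auto
    then show "prefix w v" by (cases y) auto
  next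
    assume "prefix w v"
    then obtain u where "v = w @ u" by (auto simp: prefix_def)
    then have "FinW v = app w (FinW u)" by simp
    then show "FinW v \<in> range (app w)" by blast
  qed
  then show ?thesis using FinW by (simp add: prefix_set_def)
next
  case (InfW s)
  have "InfW s \<in> range (app w) \<longleftrightarrow> stake (length w) s = w"
  proof
    assume "InfW s \<in> range (app w)"
    then obtain y where "InfW s = app w y" by auto
    then show "stake (length w) s = w" by (cases y) (auto simp: stake_shift)
  next
    assume "stake (length w) s = w"
    then have "InfW s = app w (InfW (sdrop (length w) s))"
      using stake_sdrop[of "length w" s] by simp
    then show "InfW s \<in> range (app w)" by blast
  qed
  then show ?thesis using InfW by (simp add: prefix_set_def)
qed

lemma prefix_set_UNIV_antimono: "prefix u v \<Longrightarrow> prefix_set v UNIV \<subseteq> prefix_set u UNIV"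
  unfolding prefix_def prefix_set_def by (auto simp flip: app_append)

lemma prefix_set_UNIV_comparable:
  assumes "x \<in> prefix_set u UNIV" "x \<in> prefix_set v UNIV"
  shows "prefix u v \<or> prefix v u"
proof (cases x)
  case (FinW w)
  then show ?thesis
    using assms prefix_same_cases[of u w v] by (auto simp: mem_prefix_set_UNIV)
next
  case (InfW s)
  then have "stake (length u) s = u" "stake (length v) s = v"
    using assms by (auto simp: mem_prefix_set_UNIV)
  then show ?thesis
    by (metis nat_le_linear take_is_prefix take_stake min_def)
qed

lemma Int_stable_S_inf: "Int_stable S_inf"
proof (rule Int_stableI)
  have cylinders: "prefix_set u UNIV \<inter> prefix_set v UNIV \<in> S_inf" for u v :: "'a list"
  proof -
    consider "prefix u v" | "prefix v u" | "\<not> prefix u v" "\<not> prefix v u" by blast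
    then show ?thesis
    proof cases
      case 1
      then have "prefix_set u UNIV \<inter> prefix_set v UNIV = prefix_set v UNIV"
        using prefix_set_UNIV_antimono by blast
      then show ?thesis unfolding S_inf_def by blast
    next
      case 2
      then have "prefix_set u UNIV \<inter> prefix_set v UNIV = prefix_set u UNIV"
        using prefix_set_UNIV_antimono by blast
      then show ?thesis unfolding S_inf_def by blast
    next
      case 3 then show ?thesis
        using prefix_set_UNIV_comparable unfolding S_inf_def by blast
    qed
  qed
  have singleton_cylinder: "{FinW u} \<inter> prefix_set v UNIV \<in> S_inf" for u v :: "'a list"
    unfolding S_inf_def by (cases "FinW u \<in> prefix_set v UNIV") auto
  have singletons: "{FinW u} \<inter> {FinW v} \<in> S_inf" for u v :: "'a list"
    unfolding S_inf_def by (cases "u = v") auto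
  fix A B :: "'a infword set"
  assume "A \<in> S_inf" "B \<in> S_inf"
  then show "A \<inter> B \<in> S_inf"
    using cylinders singleton_cylinder singletons unfolding S_inf_def by (auto simp: Int_commute)
qed

lemma sets_AInf_prefix_set:
  assumes "S \<in> sets AInf"
  shows "prefix_set w S \<in> sets AInf"
proof -
  have "S \<in> sigma_sets UNIV S_inf" using assms by (simp add: sets_AInf)
  then show ?thesis
  proof induction
    case (Basic A)
    then show ?case
      by (cases rule: S_inf_cases) (auto simp: prefix_set_append)
  next
    case Empty
    then show ?case by simp
  next
    case (Compl A)
    then show ?case by (simp add: prefix_set_Diff)
  next
    case (Union A)
    then show ?case by (simp add: prefix_set_UN)
  qed
qed

lemma measure_AInf_eqI:
  fixes \<mu> \<nu> :: "'a infword measure"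
  assumes "sets \<mu> = sets AInf" "sets \<nu> = sets AInf" "finite_measure \<mu>"
    and "\<And>X. X \<in> S_inf \<Longrightarrow> emeasure \<mu> X = emeasure \<nu> X"
  shows "\<mu> = \<nu>"
proof (rule measure_eqI_generator_eq[OF Int_stable_S_inf _ assms(4), where A="\<lambda>_. UNIV" and \<Omega>=UNIV])
  show "range (\<lambda>_. UNIV) \<subseteq> S_inf" unfolding S_inf_def using prefix_set_Nil[of UNIV] by blast
  show "emeasure \<mu> UNIV \<noteq> \<infinity>" using finite_measure.emeasure_finite[OF assms(3)] by simp
qed (use assms(1,2) in \<open>auto simp: sets_AInf\<close>)

lemma emeasure_eq_prefix_set_emeasure:
  fixes \<mu> \<nu> :: "'a infword measure"
  assumes sets: "sets \<mu> = sets AInf" "sets \<nu> = sets AInf"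
    and finite: "finite_measure \<mu>" "finite_measure \<nu>"
    and cylinder: "\<And>u. emeasure \<nu> (prefix_set u UNIV) = emeasure \<mu> (prefix_set (w @ u) UNIV)"
    and singleton: "\<And>u. emeasure \<nu> {FinW u} = emeasure \<mu> {FinW (w @ u)}"
    and "S \<in> sets AInf"
  shows "emeasure \<nu> S = emeasure \<mu> (prefix_set w S)"
proof -
  have "S_inf \<subseteq> Pow UNIV" "S \<in> sigma_sets UNIV S_inf" using assms(7) by (simp_all add: sets_AInf)
  with Int_stable_S_inf show ?thesis
  proof (induction rule: sigma_sets_induct_disjoint)
    case (basic A)
    then show ?case
      by (cases rule: S_inf_cases) (simp_all only: cylinder singleton prefix_set_append
          prefix_set_singleton app.simps prefix_set_empty emeasure_empty)
  next
    case empty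
    show ?case by simp
  next
    case (compl A)
    have A: "A \<in> sets AInf" using compl.hyps by (simp add: sets_AInf)
    have "emeasure \<nu> (UNIV - A) = emeasure \<nu> UNIV - emeasure \<nu> A"
      using A sets(2) finite_measure.emeasure_finite[OF finite(2)] by (intro emeasure_Diff) auto
    also have "\<dots> = emeasure \<mu> (prefix_set w UNIV) - emeasure \<mu> (prefix_set w A)"
      using cylinder[of "[]"] compl.IH by simp
    also have "\<dots> = emeasure \<mu> (prefix_set w UNIV - prefix_set w A)"
      using sets_AInf_prefix_set[OF A] sets(1) finite_measure.emeasure_finite[OF finite(1)]
      by (intro emeasure_Diff[symmetric]) (auto simp: prefix_set_subset_UNIV)
    finally show ?case by (simp only: prefix_set_Diff)
  next
    case (union A)
    have A: "range A \<subseteq> sets AInf" using union.hyps(2) by (simp add: sets_AInf)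
    have "emeasure \<nu> (\<Union>i. A i) = (\<Sum>i. emeasure \<nu> (A i))"
      using A sets(2) union.hyps(1) by (intro suminf_emeasure[symmetric]) auto
    also have "\<dots> = (\<Sum>i. emeasure \<mu> (prefix_set w (A i)))"
      using union.IH by simp
    also have "\<dots> = emeasure \<mu> (\<Union>i. prefix_set w (A i))"
      using A sets(1) union.hyps(1)
      by (intro suminf_emeasure)
        (auto simp: disjoint_family_on_def prefix_set_disjoint intro: sets_AInf_prefix_set)
    finally show ?case by (simp only: prefix_set_UN)
  qed
qed

lemma emeasure_AInf_first_letter:
  fixes \<mu> :: "'a::finite infword measure"
  assumes "sets \<mu> = sets AInf"
  shows "emeasure \<mu> UNIV = emeasure \<mu> {eps} + (\<Sum>a\<in>UNIV. emeasure \<mu> (prefix_set [a] UNIV))"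
proof -
  have cover: "UNIV = {eps} \<union> (\<Union>a. prefix_set [a] UNIV)"
  proof (rule UNIV_eq_I)
    fix x
    show "x \<in> {eps} \<union> (\<Union>a. prefix_set [a] UNIV)"
    proof (cases x)
      case (FinW v)
      show ?thesis
      proof (cases v)
        case Nil
        then show ?thesis using FinW by (simp add: eps_def)
      next
        case (Cons a u)
        then have "x = app [a] (FinW u)" using FinW by simp
        then have "x \<in> prefix_set [a] UNIV" by (simp only: app_in_prefix_set_UNIV)
        then show ?thesis by (intro UnI2 UN_I[OF UNIV_I])
      qed
    next
      case (InfW s)
      then have "x = app [shd s] (InfW (stl s))" by simp
      then have "x \<in> prefix_set [shd s] UNIV" by (simp only: app_in_prefix_set_UNIV)
      then show ?thesis by (intro UnI2 UN_I[OF UNIV_I])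
    qed
  qed
  have disjoint: "{eps} \<inter> (\<Union>a. prefix_set [a] UNIV) = {}"
    by (auto simp: eps_def mem_prefix_set_UNIV)
  have disjoint_family: "disjoint_family (\<lambda>a. prefix_set [a] UNIV)"
    unfolding disjoint_family_on_def
  proof (intro ballI impI)
    fix a b
    assume "a \<noteq> b"
    then have "\<not> prefix [a] [b]" "\<not> prefix [b] [a]" by simp_all
    then show "prefix_set [a] UNIV \<inter> prefix_set [b] UNIV = {}"
      using prefix_set_UNIV_comparable by blast
  qed
  have "emeasure \<mu> ({eps} \<union> (\<Union>a. prefix_set [a] UNIV))
      = emeasure \<mu> {eps} + emeasure \<mu> (\<Union>a. prefix_set [a] UNIV)"
    using disjoint assms unfolding eps_def by (intro plus_emeasure[symmetric]) simp_all
  also have "emeasure \<mu> (\<Union>a. prefix_set [a] UNIV) = (\<Sum>a\<in>UNIV. emeasure \<mu> (prefix_set [a] UNIV))"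
    using disjoint_family assms by (intro sum_emeasure[symmetric]) (simp_all add: image_subset_iff)
  finally show ?thesis unfolding cover[symmetric] .
qed

section \<open>Measures with prescribed masses on cylinders\<close>

locale balanced_weights =
  fixes p q :: "'a::finite list \<Rightarrow> real" and g :: "'a \<Rightarrow> nat"
  assumes bij_g: "bij_betw g UNIV {0..<CARD('a)}"
    and nonneg_q: "\<And>w. 0 \<le> q w" and nonneg_p: "\<And>w. 0 \<le> p w"
    and balance: "\<And>w. p w = q w + (\<Sum>a\<in>UNIV. p (w @ [a]))"
begin

definition letter :: "nat \<Rightarrow> 'a" where
  "letter = inv_into UNIV g"

lemma letter_g [simp]: "letter (g a) = a"
  unfolding letter_def using bij_g by (simp add: bij_betw_def inv_into_f_f)

lemma g_letter: "k < CARD('a) \<Longrightarrow> g (letter k) = k"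
  unfolding letter_def using bij_g by (simp add: bij_betw_def f_inv_into_f)

lemma g_less_card: "g a < CARD('a)"
  using bij_g by (auto simp: bij_betw_def)

definition children_mass :: "'a list \<Rightarrow> nat \<Rightarrow> real" where
  "children_mass w k = (\<Sum>i<k. p (w @ [letter i]))"

lemma children_mass_Suc: "children_mass w (Suc k) = children_mass w k + p (w @ [letter k])"
  unfolding children_mass_def by simp

lemma children_mass_card: "children_mass w CARD('a) = p w - q w"
proof -
  have "children_mass w CARD('a) = (\<Sum>i\<in>{0..<CARD('a)}. p (w @ [letter i]))"
    unfolding children_mass_def by (simp add: lessThan_atLeast0)
  also have "\<dots> = (\<Sum>a\<in>UNIV. p (w @ [a]))"
    unfolding letter_def using bij_betw_inv_into[OF bij_g]
    by (rule sum.reindex_bij_betw)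
  finally show ?thesis using balance[of w] by simp
qed

lemma children_mass_mono: "k \<le> m \<Longrightarrow> children_mass w k \<le> children_mass w m"
  unfolding children_mass_def by (rule sum_mono2) (auto simp: nonneg_p)

lemma children_mass_nonneg: "0 \<le> children_mass w k"
  unfolding children_mass_def by (rule sum_nonneg) (auto simp: nonneg_p)

lemma q_le_p: "q w \<le> p w"
  using children_mass_card[of w] children_mass_nonneg[of w "CARD('a)"] by linarith

text \<open>Words are coded by half-open intervals: \<open>cyl_ivl w\<close>, of length \<open>p w\<close>, starts with
  \<open>stop_ivl w\<close>, of length \<open>q w\<close>, followed by the intervals \<open>cyl_ivl (w @ [a])\<close> in the order
  given by \<open>g\<close>. The balance condition says that these pieces tile \<open>cyl_ivl w\<close>.\<close>

definition ivl_start :: "'a list \<Rightarrow> real" where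
  "ivl_start w = (\<Sum>k<length w. q (take k w) + children_mass (take k w) (g (w ! k)))"

lemma ivl_start_Nil [simp]: "ivl_start [] = 0"
  by (simp add: ivl_start_def)

lemma ivl_start_snoc [simp]: "ivl_start (w @ [a]) = ivl_start w + q w + children_mass w (g a)"
  unfolding ivl_start_def by (simp add: nth_append)

definition cyl_ivl :: "'a list \<Rightarrow> real set" where
  "cyl_ivl w = {ivl_start w ..< ivl_start w + p w}"

definition stop_ivl :: "'a list \<Rightarrow> real set" where
  "stop_ivl w = {ivl_start w ..< ivl_start w + q w}"

lemma stop_ivl_subset_cyl_ivl: "stop_ivl w \<subseteq> cyl_ivl w"
  unfolding cyl_ivl_def stop_ivl_def using q_le_p[of w] by auto

lemma cyl_ivl_snoc_subset: "cyl_ivl (w @ [a]) \<subseteq> cyl_ivl w"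
proof -
  have "children_mass w (Suc (g a)) \<le> children_mass w CARD('a)"
    using g_less_card[of a] by (intro children_mass_mono) simp
  then have "children_mass w (g a) + p (w @ [a]) \<le> p w - q w"
    by (simp add: children_mass_Suc children_mass_card)
  then show ?thesis
    unfolding cyl_ivl_def using children_mass_nonneg[of w "g a"] nonneg_q[of w] by auto
qed

lemma stop_ivl_Int_cyl_ivl_snoc: "stop_ivl w \<inter> cyl_ivl (w @ [a]) = {}"
  unfolding cyl_ivl_def stop_ivl_def using children_mass_nonneg[of w "g a"] by auto

lemma cyl_ivl_snoc_disjoint:
  assumes "a \<noteq> b"
  shows "cyl_ivl (w @ [a]) \<inter> cyl_ivl (w @ [b]) = {}"
proof -
  have "cyl_ivl (w @ [a]) \<inter> cyl_ivl (w @ [b]) = {}" if "g a < g b" for a b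
  proof -
    have "children_mass w (Suc (g a)) \<le> children_mass w (g b)"
      using that by (intro children_mass_mono) simp
    then have "children_mass w (g a) + p (w @ [a]) \<le> children_mass w (g b)"
      by (simp add: children_mass_Suc)
    then show ?thesis unfolding cyl_ivl_def by auto
  qed
  moreover have "g a \<noteq> g b" using assms by (metis letter_g)
  ultimately show ?thesis by (metis Int_commute linorder_neqE_nat)
qed

lemma ex_cyl_ivl_snoc:
  assumes "r \<in> cyl_ivl w" "r \<notin> stop_ivl w"
  shows "\<exists>a. r \<in> cyl_ivl (w @ [a])"
proof (rule ccontr)
  assume "\<nexists>a. r \<in> cyl_ivl (w @ [a])"
  then have outside: "\<And>a. r \<notin> cyl_ivl (w @ [a])" by blast
  have "k \<le> CARD('a) \<Longrightarrow> ivl_start w + q w + children_mass w k \<le> r" for k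
  proof (induction k)
    case 0
    then show ?case using assms by (auto simp: cyl_ivl_def stop_ivl_def children_mass_def)
  next
    case (Suc k)
    then have "ivl_start (w @ [letter k]) \<le> r" by (simp add: g_letter)
    then have "ivl_start w + q w + children_mass w k + p (w @ [letter k]) \<le> r"
      using outside[of "letter k"] Suc.prems by (auto simp: cyl_ivl_def g_letter)
    then show ?case by (simp add: children_mass_Suc)
  qed
  from this[of "CARD('a)"] have "ivl_start w + p w \<le> r" by (simp add: children_mass_card)
  then show False using assms by (auto simp: cyl_ivl_def)
qed

lemma cyl_ivl_antimono: "prefix u v \<Longrightarrow> cyl_ivl v \<subseteq> cyl_ivl u"
proof (induction v rule: rev_induct)
  case Nil
  then show ?case by simp
next
  case (snoc a v)
  then show ?case using cyl_ivl_snoc_subset[of v a] by (auto simp: prefix_snoc)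
qed

lemma cyl_ivl_subset_Nil: "cyl_ivl w \<subseteq> cyl_ivl []"
  using cyl_ivl_antimono[of "[]" w] by simp

text \<open>\<open>path r\<close> follows \<open>r\<close> down the nested intervals: it becomes constant once \<open>r\<close> lies in a
  stop interval, and otherwise grows by one letter per step towards a stream.\<close>

definition next_letter :: "real \<Rightarrow> 'a list \<Rightarrow> 'a option" where
  "next_letter r w = (if r \<in> stop_ivl w then None else Some (SOME a. r \<in> cyl_ivl (w @ [a])))"

fun path :: "real \<Rightarrow> nat \<Rightarrow> 'a list" where
  "path r 0 = []"
| "path r (Suc n) = (case next_letter r (path r n) of None \<Rightarrow> path r n | Some a \<Rightarrow> path r n @ [a])"

definition stops :: "real \<Rightarrow> nat \<Rightarrow> bool" where
  "stops r n \<longleftrightarrow> next_letter r (path r n) = None"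

definition decode :: "real \<Rightarrow> 'a infword" where
  "decode r = (if \<exists>n. stops r n then FinW (path r (LEAST n. stops r n))
               else InfW (to_stream (\<lambda>n. path r (Suc n) ! n)))"

lemma path_in_cyl_ivl: "r \<in> cyl_ivl [] \<Longrightarrow> r \<in> cyl_ivl (path r n)"
proof (induction n)
  case 0
  then show ?case by simp
next
  case (Suc n)
  show ?case
  proof (cases "next_letter r (path r n)")
    case None
    then show ?thesis using Suc by simp
  next
    case (Some a)
    then have "r \<notin> stop_ivl (path r n)" "a = (SOME a. r \<in> cyl_ivl (path r n @ [a]))"
      by (auto simp: next_letter_def split: if_splits)
    then have "r \<in> cyl_ivl (path r n @ [a])"
      using ex_cyl_ivl_snoc[of r "path r n"] Suc someI_ex by metis
    then show ?thesis using Some by simp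
  qed
qed

lemma path_length_eq_if_in_cyl_ivl:
  "r \<in> cyl_ivl w \<Longrightarrow> path r (length w) = w \<and> (\<forall>m<length w. \<not> stops r m)"
proof (induction w rule: rev_induct)
  case Nil
  then show ?case by simp
next
  case (snoc a w)
  have "r \<in> cyl_ivl w" using snoc.prems cyl_ivl_snoc_subset by blast
  with snoc.IH have IH: "path r (length w) = w" "\<forall>m<length w. \<not> stops r m" by auto
  have "r \<notin> stop_ivl w" using stop_ivl_Int_cyl_ivl_snoc[of w a] snoc.prems by blast
  moreover have "(SOME b. r \<in> cyl_ivl (w @ [b])) = a"
    using snoc.prems cyl_ivl_snoc_disjoint[of _ a w] by (intro some_equality) auto
  ultimately have "next_letter r w = Some a" by (simp add: next_letter_def)
  then show ?case using IH by (auto simp: stops_def less_Suc_eq)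
qed

lemma length_path: "(\<forall>m<n. \<not> stops r m) \<Longrightarrow> length (path r n) = n"
proof (induction n)
  case 0
  then show ?case by simp
next
  case (Suc n)
  then obtain a where "next_letter r (path r n) = Some a" by (auto simp: stops_def)
  then show ?case using Suc by simp
qed

lemma prefix_path: "m \<le> n \<Longrightarrow> prefix (path r m) (path r n)"
proof (induction n)
  case 0
  then show ?case by simp
next
  case (Suc n)
  have "prefix (path r n) (path r (Suc n))"
    by (cases "next_letter r (path r n)") auto
  then show ?case
    using Suc by (metis le_Suc_eq prefix_order.order_refl prefix_order.order_trans)
qed

lemma stake_path_stream:
  assumes "\<forall>n. \<not> stops r n"
  shows "stake n (to_stream (\<lambda>n. path r (Suc n) ! n)) = path r n"
proof (induction n)
  case 0
  then show ?case by simp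
next
  case (Suc n)
  obtain a where a: "next_letter r (path r n) = Some a" using assms by (auto simp: stops_def)
  have "length (path r n) = n" using assms length_path by blast
  moreover have path_Suc: "path r (Suc n) = path r n @ [a]" using a by simp
  ultimately have "path r (Suc n) ! n = a" by (metis nth_append_length)
  then have "to_stream (\<lambda>n. path r (Suc n) ! n) !! n = a"
    by (simp add: to_stream_def del: path.simps)
  then show ?case unfolding stake_Suc Suc.IH path_Suc by simp
qed

lemma decode_in_prefix_set_iff:
  assumes r: "r \<in> cyl_ivl []"
  shows "decode r \<in> prefix_set w UNIV \<longleftrightarrow> r \<in> cyl_ivl w"
proof
  assume prefix: "decode r \<in> prefix_set w UNIV"
  show "r \<in> cyl_ivl w"
  proof (cases "\<exists>n. stops r n")
    case True
    then have "prefix w (path r (LEAST n. stops r n))"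
      using prefix by (simp add: decode_def mem_prefix_set_UNIV)
    then show ?thesis using cyl_ivl_antimono path_in_cyl_ivl[OF r] by blast
  next
    case False
    then have "stake (length w) (to_stream (\<lambda>n. path r (Suc n) ! n)) = w"
      using prefix by (simp add: decode_def mem_prefix_set_UNIV)
    then have "path r (length w) = w" using stake_path_stream False by auto
    then show ?thesis using path_in_cyl_ivl[OF r, of "length w"] by simp
  qed
next
  assume "r \<in> cyl_ivl w"
  then have path: "path r (length w) = w" and not_stops: "\<forall>m<length w. \<not> stops r m"
    using path_length_eq_if_in_cyl_ivl by auto
  show "decode r \<in> prefix_set w UNIV"
  proof (cases "\<exists>n. stops r n")
    case True
    then have "stops r (LEAST n. stops r n)" by (rule LeastI_ex)
    then have "length w \<le> (LEAST n. stops r n)" using not_stops by (meson not_le)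
    then have "prefix w (path r (LEAST n. stops r n))" using prefix_path path by metis
    then show ?thesis using True by (simp add: decode_def mem_prefix_set_UNIV)
  next
    case False
    then show ?thesis using stake_path_stream path by (simp add: decode_def mem_prefix_set_UNIV)
  qed
qed

lemma decode_eq_FinW_iff:
  assumes r: "r \<in> cyl_ivl []"
  shows "decode r = FinW w \<longleftrightarrow> r \<in> stop_ivl w"
proof
  assume decode: "decode r = FinW w"
  then have ex: "\<exists>n. stops r n" by (auto simp: decode_def split: if_splits)
  then have "w = path r (LEAST n. stops r n)" using decode by (simp add: decode_def)
  moreover have "stops r (LEAST n. stops r n)" using ex by (rule LeastI_ex)
  ultimately show "r \<in> stop_ivl w" by (auto simp: stops_def next_letter_def split: if_splits)
next
  assume stop: "r \<in> stop_ivl w"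
  then have "r \<in> cyl_ivl w" using stop_ivl_subset_cyl_ivl by blast
  then have path: "path r (length w) = w" and not_stops: "\<forall>m<length w. \<not> stops r m"
    using path_length_eq_if_in_cyl_ivl by auto
  have stops: "stops r (length w)" using path stop by (simp add: stops_def next_letter_def)
  have "(LEAST n. stops r n) = length w"
    using stops not_stops by (intro Least_equality) (auto simp: not_less[symmetric])
  then show "decode r = FinW w" using stops path by (auto simp: decode_def)
qed

definition weights_measure :: "'a infword measure" where
  "weights_measure = distr (restrict_space lborel (cyl_ivl [])) AInf decode"

lemma sets_restrict_space_cyl_ivl_Nil:
  "A \<in> sets (restrict_space lborel (cyl_ivl [])) \<longleftrightarrow> A \<subseteq> cyl_ivl [] \<and> A \<in> sets borel"
  by (subst sets_restrict_space_iff) (auto simp: cyl_ivl_def)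

lemma measurable_decode: "decode \<in> measurable (restrict_space lborel (cyl_ivl [])) AInf"
  unfolding AInf_def
proof (rule measurable_measure_of)
  fix X :: "'a infword set"
  assume "X \<in> S_inf"
  then show "decode -` X \<inter> space (restrict_space lborel (cyl_ivl [])) \<in> sets (restrict_space lborel (cyl_ivl []))"
  proof (cases rule: S_inf_cases)
    case (singleton w)
    have "decode -` X \<inter> cyl_ivl [] = stop_ivl w"
      using singleton decode_eq_FinW_iff stop_ivl_subset_cyl_ivl cyl_ivl_subset_Nil by blast
    moreover have "stop_ivl w \<subseteq> cyl_ivl []"
      using stop_ivl_subset_cyl_ivl cyl_ivl_subset_Nil by blast
    ultimately show ?thesis
      by (simp add: sets_restrict_space_cyl_ivl_Nil space_restrict_space stop_ivl_def)
  next
    case (cylinder w)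
    have "decode -` X \<inter> cyl_ivl [] = cyl_ivl w"
      using cylinder decode_in_prefix_set_iff cyl_ivl_subset_Nil by blast
    moreover have "cyl_ivl w \<in> sets borel" by (simp add: cyl_ivl_def)
    ultimately show ?thesis
      using cyl_ivl_subset_Nil by (simp add: sets_restrict_space_cyl_ivl_Nil space_restrict_space)
  qed simp
qed auto

lemma emeasure_weights_measure_prefix_set:
  "emeasure weights_measure (prefix_set w UNIV) = ennreal (p w)"
proof -
  have "decode -` prefix_set w UNIV \<inter> cyl_ivl [] = cyl_ivl w"
    using decode_in_prefix_set_iff cyl_ivl_subset_Nil by blast
  then have "emeasure weights_measure (prefix_set w UNIV)
      = emeasure (restrict_space lborel (cyl_ivl [])) (cyl_ivl w)"
    unfolding weights_measure_def
    by (simp add: emeasure_distr[OF measurable_decode] space_restrict_space)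
  also have "\<dots> = emeasure lborel (cyl_ivl w)"
    using cyl_ivl_subset_Nil by (intro emeasure_restrict_space) (auto simp: cyl_ivl_def)
  also have "\<dots> = ennreal (p w)" using nonneg_p[of w] by (simp add: cyl_ivl_def)
  finally show ?thesis .
qed

lemma emeasure_weights_measure_FinW: "emeasure weights_measure {FinW w} = ennreal (q w)"
proof -
  have "decode -` {FinW w} \<inter> cyl_ivl [] = stop_ivl w"
    using decode_eq_FinW_iff stop_ivl_subset_cyl_ivl cyl_ivl_subset_Nil by blast
  then have "emeasure weights_measure {FinW w}
      = emeasure (restrict_space lborel (cyl_ivl [])) (stop_ivl w)"
    unfolding weights_measure_def
    by (simp add: emeasure_distr[OF measurable_decode] space_restrict_space)
  also have "\<dots> = emeasure lborel (stop_ivl w)"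
    using stop_ivl_subset_cyl_ivl[of w] cyl_ivl_subset_Nil[of w]
    by (intro emeasure_restrict_space) (auto simp: cyl_ivl_def)
  also have "\<dots> = ennreal (q w)" using nonneg_q[of w] by (simp add: stop_ivl_def)
  finally show ?thesis .
qed

lemma sets_weights_measure [simp]: "sets weights_measure = sets AInf"
  by (simp add: weights_measure_def)

lemma subprob_space_weights_measure:
  assumes "p [] \<le> 1"
  shows "subprob_space weights_measure"
proof
  show "emeasure weights_measure (space weights_measure) \<le> 1"
    using emeasure_weights_measure_prefix_set[of "[]"] assms
    by (simp add: weights_measure_def)
  show "space weights_measure \<noteq> {}" by (simp add: weights_measure_def)
qed

end

section \<open>Coalgebra morphisms into sub-probability measures on words\<close>

fun run :: "('a \<Rightarrow> 'y \<Rightarrow> 'y) \<Rightarrow> 'a list \<Rightarrow> 'y \<Rightarrow> 'y" where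
  "run tau [] y = y"
| "run tau (a # w) y = run tau w (tau a y)"

lemma run_snoc: "run tau (w @ [a]) y = tau a (run tau w y)"
  by (induction w arbitrary: y) auto

lemma measurable_run:
  assumes "\<And>a. tau a \<in> measurable Y Y"
  shows "run tau w \<in> measurable Y Y"
proof (induction w)
  case Nil
  have "run tau [] = id" by (rule ext) simp
  then show ?case by simp
next
  case (Cons a w)
  have "run tau (a # w) = run tau w \<circ> tau a" by (rule ext) simp
  then show ?case using Cons assms measurable_comp by metis
qed

lemma run_in_space: "(\<And>a. tau a \<in> measurable Y Y) \<Longrightarrow> y \<in> space Y \<Longrightarrow> run tau w y \<in> space Y"
  using measurable_run measurable_space by metis

lemma measurable_unitI_bounds:
  assumes "f \<in> measurable Y unitI" "y \<in> space Y"
  shows "0 \<le> f y" "f y \<le> 1"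
  using measurable_space[OF assms] by (simp_all add: unitI_def space_restrict_space)

lemma measurable_unitI_borel: "f \<in> measurable Y unitI \<Longrightarrow> f \<in> borel_measurable Y"
  by (simp add: unitI_def measurable_restrict_space2_iff)

lemma coalg_morphism_space:
  assumes "coalg_morphism Y b1 bs tau f" "y \<in> space Y"
  shows "subprob_space (f y)" "sets (f y) = sets AInf"
  using assms measurable_space[of f Y "subprob_algebra AInf" y]
  by (simp_all add: coalg_morphism_def space_subprob_algebra)

lemma coalg_morphism_emeasure_run:
  assumes f: "coalg_morphism Y b1 bs tau f" and tau: "\<And>a. tau a \<in> measurable Y Y"
    and "y \<in> space Y"
  shows "emeasure (f y) (prefix_set w UNIV) = ennreal (b1 (run tau w y))"
    and "emeasure (f y) {FinW w} = ennreal (bs (run tau w y))"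
proof -
  have "emeasure (f y) (prefix_set w UNIV) = ennreal (b1 (run tau w y)) \<and>
        emeasure (f y) {FinW w} = ennreal (bs (run tau w y))"
    using \<open>y \<in> space Y\<close>
  proof (induction w arbitrary: y)
    case Nil
    then show ?case using f by (simp add: coalg_morphism_def eps_def)
  next
    case (Cons a w)
    have tau_y: "tau a y \<in> space Y" using tau Cons.prems measurable_space by metis
    have derivative: "emeasure (f (tau a y)) S = emeasure (f y) (prefix_set [a] S)"
      if "S \<in> sets AInf" for S
      using f Cons.prems that unfolding coalg_morphism_def by blast
    have "emeasure (f y) (prefix_set (a # w) UNIV) = emeasure (f (tau a y)) (prefix_set w UNIV)"
      using derivative[OF sets_AInf_generators(2)] by (simp add: prefix_set_append)
    moreover have "emeasure (f y) {FinW (a # w)} = emeasure (f (tau a y)) {FinW w}"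
      using derivative[OF sets_AInf_generators(1)] by simp
    ultimately show ?case using Cons.IH[OF tau_y] by simp
  qed
  then show "emeasure (f y) (prefix_set w UNIV) = ennreal (b1 (run tau w y))"
    and "emeasure (f y) {FinW w} = ennreal (bs (run tau w y))" by auto
qed

lemma coalg_morphism_unique:
  fixes f g :: "'y \<Rightarrow> 'a infword measure"
  assumes "coalg_morphism Y b1 bs tau f" "coalg_morphism Y b1 bs tau g"
    and "\<And>a. tau a \<in> measurable Y Y" "y \<in> space Y"
  shows "f y = g y"
proof (rule measure_AInf_eqI)
  show "sets (f y) = sets AInf" "sets (g y) = sets AInf" "finite_measure (f y)"
    using coalg_morphism_space[OF assms(1,4)] coalg_morphism_space[OF assms(2,4)]
    by (simp_all add: subprob_space_def)
  fix X :: "'a infword set"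
  assume "X \<in> S_inf"
  then show "emeasure (f y) X = emeasure (g y) X"
    by (cases rule: S_inf_cases)
      (simp_all add: coalg_morphism_emeasure_run[OF assms(1,3,4)]
        coalg_morphism_emeasure_run[OF assms(2,3,4)])
qed

lemma coalg_morphism_balance:
  fixes tau :: "'a::finite \<Rightarrow> 'y \<Rightarrow> 'y"
  assumes b1: "b1 \<in> measurable Y unitI" and bs: "bs \<in> measurable Y unitI"
    and tau: "\<And>a. tau a \<in> measurable Y Y"
    and f: "coalg_morphism Y b1 bs tau f" and y: "y \<in> space Y"
  shows "b1 y = bs y + (\<Sum>a\<in>UNIV. b1 (tau a y))"
proof -
  have tau_y: "tau a y \<in> space Y" for a using tau y measurable_space by metis
  have "ennreal (b1 y) = emeasure (f y) UNIV"
    using coalg_morphism_emeasure_run(1)[OF f tau y, of "[]"] by simp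
  also have "\<dots> = emeasure (f y) {eps} + (\<Sum>a\<in>UNIV. emeasure (f y) (prefix_set [a] UNIV))"
    using coalg_morphism_space(2)[OF f y] by (rule emeasure_AInf_first_letter)
  also have "\<dots> = ennreal (bs y) + (\<Sum>a\<in>UNIV. ennreal (b1 (tau a y)))"
    using coalg_morphism_emeasure_run[OF f tau y] by (simp add: eps_def)
  also have "\<dots> = ennreal (bs y + (\<Sum>a\<in>UNIV. b1 (tau a y)))"
    using measurable_unitI_bounds[OF bs y] measurable_unitI_bounds[OF b1 tau_y]
    by (simp add: ennreal_plus sum_nonneg)
  finally show ?thesis
    using measurable_unitI_bounds[OF bs y] measurable_unitI_bounds[OF b1 tau_y]
      measurable_unitI_bounds[OF b1 y]
    by (subst (asm) ennreal_inj) (auto intro!: add_nonneg_nonneg sum_nonneg)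
qed

definition letter_rank :: "'a::finite \<Rightarrow> nat" where
  "letter_rank = (SOME g. bij_betw g UNIV {0..<CARD('a)})"

lemma bij_letter_rank: "bij_betw (letter_rank :: 'a::finite \<Rightarrow> nat) UNIV {0..<CARD('a)}"
proof -
  have "\<exists>g. bij_betw g (UNIV :: 'a set) {0..<CARD('a)}"
    using ex_bij_betw_finite_nat[OF finite] by blast
  then show ?thesis unfolding letter_rank_def by (rule someI_ex)
qed

definition run_measure ::
  "('y \<Rightarrow> real) \<Rightarrow> ('y \<Rightarrow> real) \<Rightarrow> ('a::finite \<Rightarrow> 'y \<Rightarrow> 'y) \<Rightarrow> 'y \<Rightarrow> 'a infword measure" where
  "run_measure b1 bs tau y =
     balanced_weights.weights_measure (\<lambda>w. b1 (run tau w y)) (\<lambda>w. bs (run tau w y)) letter_rank"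

context
  fixes Y :: "'y measure" and b1 bs :: "'y \<Rightarrow> real" and tau :: "'a::finite \<Rightarrow> 'y \<Rightarrow> 'y"
  assumes b1: "b1 \<in> measurable Y unitI" and bs: "bs \<in> measurable Y unitI"
    and tau: "\<And>a. tau a \<in> measurable Y Y"
    and balance: "\<forall>y\<in>space Y. b1 y = bs y + (\<Sum>a\<in>UNIV. b1 (tau a y))"
begin

lemma run_measure:
  assumes y: "y \<in> space Y"
  shows "subprob_space (run_measure b1 bs tau y)"
    and "sets (run_measure b1 bs tau y) = sets AInf"
    and "emeasure (run_measure b1 bs tau y) (prefix_set w UNIV) = ennreal (b1 (run tau w y))"
    and "emeasure (run_measure b1 bs tau y) {FinW w} = ennreal (bs (run tau w y))"
proof -
  have run_y: "run tau w y \<in> space Y" for w using run_in_space[OF tau y] .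
  interpret balanced_weights "\<lambda>w. b1 (run tau w y)" "\<lambda>w. bs (run tau w y)" letter_rank
  proof
    show "0 \<le> bs (run tau w y)" "0 \<le> b1 (run tau w y)" for w
      using measurable_unitI_bounds[OF bs run_y] measurable_unitI_bounds[OF b1 run_y] by simp_all
    show "b1 (run tau w y) = bs (run tau w y) + (\<Sum>a\<in>UNIV. b1 (run tau (w @ [a]) y))" for w
      using balance run_y[of w] by (simp add: run_snoc)
  qed (rule bij_letter_rank)
  show "subprob_space (run_measure b1 bs tau y)"
    unfolding run_measure_def using measurable_unitI_bounds(2)[OF b1 y]
    by (intro subprob_space_weights_measure) simp
  show "sets (run_measure b1 bs tau y) = sets AInf"
    by (simp add: run_measure_def)
  show "emeasure (run_measure b1 bs tau y) (prefix_set w UNIV) = ennreal (b1 (run tau w y))"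
    "emeasure (run_measure b1 bs tau y) {FinW w} = ennreal (bs (run tau w y))"
    unfolding run_measure_def
    by (simp_all add: emeasure_weights_measure_prefix_set emeasure_weights_measure_FinW)
qed

lemma measurable_run_measure: "run_measure b1 bs tau \<in> measurable Y (subprob_algebra AInf)"
proof (rule measurable_subprob_algebra_generated[OF sets_AInf Int_stable_S_inf])
  have measurable_run_ennreal: "(\<lambda>y. ennreal (h (run tau w y))) \<in> borel_measurable Y"
    if "h \<in> measurable Y unitI" for h :: "'y \<Rightarrow> real" and w
    using measurable_comp[OF measurable_run[where tau=tau, OF tau] measurable_unitI_borel[OF that]]
    by (simp add: comp_def)
  show "(\<lambda>y. emeasure (run_measure b1 bs tau y) X) \<in> borel_measurable Y" if "X \<in> S_inf" for X
    using that
  proof (cases rule: S_inf_cases)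
    case (singleton w)
    have "(\<lambda>y. emeasure (run_measure b1 bs tau y) {FinW w}) \<in> borel_measurable Y"
      using measurable_run_ennreal[OF bs]
      by (rule measurable_cong[THEN iffD1, rotated]) (simp add: run_measure)
    then show ?thesis using singleton by simp
  next
    case (cylinder w)
    have "(\<lambda>y. emeasure (run_measure b1 bs tau y) (prefix_set w UNIV)) \<in> borel_measurable Y"
      using measurable_run_ennreal[OF b1]
      by (rule measurable_cong[THEN iffD1, rotated]) (simp add: run_measure)
    then show ?thesis using cylinder by simp
  qed simp
  then show "(\<lambda>y. emeasure (run_measure b1 bs tau y) UNIV) \<in> borel_measurable Y"
    using prefix_set_Nil[of UNIV] unfolding S_inf_def by blast
qed (auto simp: run_measure)

lemma coalg_morphism_run_measure: "coalg_morphism Y b1 bs tau (run_measure b1 bs tau)"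
  unfolding coalg_morphism_def
proof (intro conjI ballI allI measurable_run_measure)
  fix y assume y: "y \<in> space Y"
  show "emeasure (run_measure b1 bs tau y) (space AInf) = ennreal (b1 y)"
    using run_measure(3)[OF y, of "[]"] by simp
  show "emeasure (run_measure b1 bs tau y) {eps} = ennreal (bs y)"
    using run_measure(4)[OF y, of "[]"] by (simp add: eps_def)
  fix a and S :: "'a infword set"
  assume "S \<in> sets AInf"
  have tau_y: "tau a y \<in> space Y" using tau y measurable_space by metis
  show "emeasure (run_measure b1 bs tau (tau a y)) S = emeasure (run_measure b1 bs tau y) (prefix_set [a] S)"
  proof (rule emeasure_eq_prefix_set_emeasure)
    show "finite_measure (run_measure b1 bs tau y)" "finite_measure (run_measure b1 bs tau (tau a y))"
      using run_measure(1)[OF y] run_measure(1)[OF tau_y] by (simp_all add: subprob_space_def)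
  qed (simp_all add: run_measure y tau_y \<open>S \<in> sets AInf\<close>)
qed

end

theorem mainTheorem10:
  fixes Y :: "'y measure"
    and b1 bs :: "'y \<Rightarrow> real"
    and tau :: "'a::finite \<Rightarrow> 'y \<Rightarrow> 'y"
  assumes "b1 \<in> measurable Y unitI"
    and "bs \<in> measurable Y unitI"
    and "\<And>a. tau a \<in> measurable Y Y"
  shows "((\<exists>f. coalg_morphism Y b1 bs tau f) \<longleftrightarrow>
           (\<forall>y\<in>space Y. b1 y = bs y + (\<Sum>a\<in>UNIV. b1 (tau a y))))
         \<and> (\<forall>f g. coalg_morphism Y b1 bs tau f \<and> coalg_morphism Y b1 bs tau g
                  \<longrightarrow> (\<forall>y\<in>space Y. f y = g y))"
proof (intro conjI iffI allI impI ballI)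
  show "b1 y = bs y + (\<Sum>a\<in>UNIV. b1 (tau a y))"
    if "\<exists>f. coalg_morphism Y b1 bs tau f" "y \<in> space Y" for y
    using that coalg_morphism_balance[where tau=tau, OF assms] by blast
  show "\<exists>f. coalg_morphism Y b1 bs tau f"
    if "\<forall>y\<in>space Y. b1 y = bs y + (\<Sum>a\<in>UNIV. b1 (tau a y))"
    using coalg_morphism_run_measure[where tau=tau, OF assms that] by blast
  show "f y = g y"
    if "coalg_morphism Y b1 bs tau f \<and> coalg_morphism Y b1 bs tau g" "y \<in> space Y" for f g y
    using that coalg_morphism_unique[where tau=tau, OF _ _ assms(3)] by blast
qed

end
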